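(* Let $\{G_i\}_{i\ge1}$ be a family of connected finite simple (unweighted) graphs such that $G_i$ has $i$ vertices, and for a partition $\lambda$ let $G_\lambda=G_{\lambda_1}\cup\dots\cup G_{\lambda_{\ell(\lambda)}}$ (disjoint union), so that $\{X_{G_\lambda}\}_\lambda$ is a basis of $\Lambda$. Then for every finite simple graph $G$ with $n$ vertices, \[\sum_{\lambda\vdash n}[X_{G_\lambda}]X_G=1.\]
   Context: $\Lambda$ is the algebra of symmetric functions over $\mathbb{Q}$. $X_G=\sum_\kappa\prod_v x_{\kappa(v)}$ over proper colourings $\kappa:V(G)\to\{1,2,\dots\}$. It is known that for such a family $\{G_i\}$ the functions $X_{G_\lambda}$ form a basis of $\Lambda$. $[X_{G_\lambda}]f$ denotes the coefficient of $X_{G_\lambda}$ in the expansion of $f$ in this basis. *)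

theory Defs
  imports Complex_Main "HOL-Library.FuncSet"
begin

definition simple_graph :: "'a set \<Rightarrow> ('a \<Rightarrow> 'a \<Rightarrow> bool) \<Rightarrow> bool" where
  "simple_graph V E \<longleftrightarrow> finite V \<and> (\<forall>u\<in>V. \<forall>v\<in>V. E u v \<longrightarrow> E v u) \<and> (\<forall>v\<in>V. \<not> E v v)"

definition connected_graph :: "'a set \<Rightarrow> ('a \<Rightarrow> 'a \<Rightarrow> bool) \<Rightarrow> bool" where
  "connected_graph V E \<longleftrightarrow>
     (\<forall>u\<in>V. \<forall>v\<in>V. (\<lambda>x y. x \<in> V \<and> y \<in> V \<and> E x y)\<^sup>*\<^sup>* u v)"

definition proper_colourings :: "'a set \<Rightarrow> ('a \<Rightarrow> 'a \<Rightarrow> bool) \<Rightarrow> ('a \<Rightarrow> nat) set" where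
  "proper_colourings V E =
     {\<kappa>. \<kappa> \<in> V \<rightarrow>\<^sub>E {1..} \<and> (\<forall>u\<in>V. \<forall>v\<in>V. E u v \<longrightarrow> \<kappa> u \<noteq> \<kappa> v)}"

text \<open>The chromatic symmetric function X_G, viewed as a formal power series in
x_1, x_2, ...: its coefficient of the monomial prod_i x_i^(alpha i).\<close>
definition chrom_sym :: "'a set \<Rightarrow> ('a \<Rightarrow> 'a \<Rightarrow> bool) \<Rightarrow> (nat \<Rightarrow> nat) \<Rightarrow> rat" where
  "chrom_sym V E \<alpha> =
     of_nat (card {\<kappa> \<in> proper_colourings V E. \<forall>i. card {v \<in> V. \<kappa> v = i} = \<alpha> i})"

definition partitions_of :: "nat \<Rightarrow> nat list set" where
  "partitions_of n = {la. sorted_wrt (\<ge>) la \<and> (\<forall>p\<in>set la. 0 < p) \<and> sum_list la = n}"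

text \<open>A family of graphs G_i, G_i having vertex set {0..<i} and edge relation Fam i.
The disjoint union G_lambda has vertex set {(j,v). j < length lambda, v < lambda!j}.\<close>
definition union_vertices :: "nat list \<Rightarrow> (nat \<times> nat) set" where
  "union_vertices la = {(j, v). j < length la \<and> v < la ! j}"

definition union_edges ::
  "(nat \<Rightarrow> nat \<Rightarrow> nat \<Rightarrow> bool) \<Rightarrow> nat list \<Rightarrow> nat \<times> nat \<Rightarrow> nat \<times> nat \<Rightarrow> bool" where
  "union_edges Fam la x y \<longleftrightarrow> fst x = fst y \<and> Fam (la ! fst x) (snd x) (snd y)"

end

theory Submission
  imports Defs "HOL-Library.Indicator_Function"
begin

text \<open>Compare the coefficients of the squarefree monomial \<open>x\<^sub>1 x\<^sub>2 \<cdots> x\<^sub>n\<close>. For any loopless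
  graph on \<open>n\<close> vertices this coefficient of \<open>X\<^sub>G\<close> counts the colourings that use each of the
  colours \<open>1, \<dots>, n\<close> exactly once; these are injective, hence automatically proper, so there are
  \<open>n!\<close> of them. Thus the expansion yields \<open>n! = (\<Sum>\<^sub>\<lambda> [X\<^bsub>G\<^sub>\<lambda>\<^esub>] X\<^sub>G) \<cdot> n!\<close>.\<close>

lemma fibres_indicator_iff_bij_betw:
  assumes "finite V"
  shows "(\<forall>i. card {v \<in> V. f v = i} = indicator A i) \<longleftrightarrow> bij_betw f V A"
proof
  assume fibres: "\<forall>i. card {v \<in> V. f v = i} = indicator A i"
  have fibre_nonempty_iff: "{v \<in> V. f v = i} \<noteq> {} \<longleftrightarrow> i \<in> A" for i
  proof -
    have "{v \<in> V. f v = i} \<noteq> {} \<longleftrightarrow> card {v \<in> V. f v = i} \<noteq> 0"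
      using assms by simp
    then show ?thesis
      using fibres by (simp add: indicator_def)
  qed
  have "inj_on f V"
  proof (rule inj_onI, rule ccontr)
    fix u v assume uv: "u \<in> V" "v \<in> V" "f u = f v" "u \<noteq> v"
    have "card {u, v} \<le> card {w \<in> V. f w = f v}"
      using uv assms by (intro card_mono) auto
    with uv fibres show False by (simp add: indicator_def of_bool_def split: if_splits)
  qed
  moreover have "f ` V = A"
    using fibre_nonempty_iff by (force simp: image_iff)
  ultimately show "bij_betw f V A"
    by (simp add: bij_betw_def)
next
  assume bij: "bij_betw f V A"
  have "card {v \<in> V. f v = i} = indicator A i" for i
  proof (cases "i \<in> A")
    case True
    then obtain v where "v \<in> V" "f v = i"
      using bij by (auto simp: bij_betw_def)
    then have "{w \<in> V. f w = i} = {v}"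
      using bij by (auto simp: bij_betw_def inj_on_def)
    with True show ?thesis by simp
  next
    case False
    then have empty_fibre: "{w \<in> V. f w = i} = {}"
      using bij by (auto simp: bij_betw_def)
    show ?thesis
      unfolding empty_fibre using False by simp
  qed
  then show "\<forall>i. card {v \<in> V. f v = i} = indicator A i" ..
qed

lemma card_extensional_bijections:
  assumes "finite V" "finite A" "card V = card A"
  shows "card {f \<in> V \<rightarrow>\<^sub>E A. bij_betw f V A} = fact (card A)"
proof -
  have "{f \<in> V \<rightarrow>\<^sub>E A. bij_betw f V A} = {f \<in> V \<rightarrow>\<^sub>E A. inj_on f V}"
  proof (intro Collect_cong conj_cong refl)
    fix f assume "f \<in> V \<rightarrow>\<^sub>E A"
    then have "f ` V \<subseteq> A" by auto
    then show "bij_betw f V A \<longleftrightarrow> inj_on f V"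
      using assms by (metis bij_betw_def card_image card_subset_eq)
  qed
  also have "card \<dots> = card A ^ (card V - card V) * prod ((-) (card A)) {0..<card V}"
    using assms by (intro card_inj_on_subset_funcset) auto
  also have "\<dots> = fact (card A)"
    using assms by (simp add: fact_prod_rev)
  finally show ?thesis .
qed

lemma chrom_sym_squarefree_coeff:
  assumes "finite V" "\<forall>v\<in>V. \<not> E v v" "card V = n"
  shows "chrom_sym V E (indicator {1..n}) = fact n"
proof -
  have "{\<kappa> \<in> proper_colourings V E. \<forall>i. card {v \<in> V. \<kappa> v = i} = indicator {1..n} i}
      = {\<kappa> \<in> V \<rightarrow>\<^sub>E {1..n}. bij_betw \<kappa> V {1..n}}"
    using assms(1,2)
    by (auto simp: proper_colourings_def fibres_indicator_iff_bij_betw bij_betw_def inj_on_def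
        PiE_iff image_subset_iff)
  then show ?thesis
    using card_extensional_bijections[of V "{1..n}"] assms
    by (simp add: chrom_sym_def of_nat_fact)
qed

lemma finite_union_vertices: "finite (union_vertices la)"
  and card_union_vertices: "card (union_vertices la) = sum_list la"
proof -
  have sigma: "union_vertices la = (SIGMA j:{..<length la}. {..<la ! j})"
    unfolding union_vertices_def by auto
  show "finite (union_vertices la)"
    unfolding sigma by simp
  show "card (union_vertices la) = sum_list la"
    unfolding sigma by (simp add: sum_list_sum_nth atLeast0LessThan)
qed

lemma union_edges_loopless:
  assumes "\<And>i v. i \<in> set la \<Longrightarrow> v < i \<Longrightarrow> \<not> Fam i v v"
  shows "\<forall>x\<in>union_vertices la. \<not> union_edges Fam la x x"
  using assms by (auto simp: union_vertices_def union_edges_def)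

theorem theorem3p5:
  fixes Fam :: "nat \<Rightarrow> nat \<Rightarrow> nat \<Rightarrow> bool"
    and V :: "'a set" and E :: "'a \<Rightarrow> 'a \<Rightarrow> bool"
    and c :: "nat list \<Rightarrow> rat"
  assumes fam: "\<And>i. i \<ge> 1 \<Longrightarrow> simple_graph {0..<i} (Fam i) \<and> connected_graph {0..<i} (Fam i)"
    and G: "simple_graph V E"
    and expansion: "\<forall>\<alpha>. chrom_sym V E \<alpha> =
        (\<Sum>la\<in>partitions_of (card V). c la * chrom_sym (union_vertices la) (union_edges Fam la) \<alpha>)"
  shows "(\<Sum>la\<in>partitions_of (card V). c la) = 1"
proof -
  define n where "n = card V"
  have coeff_union: "chrom_sym (union_vertices la) (union_edges Fam la) (indicator {1..n}) = fact n"
    if "la \<in> partitions_of n" for la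
  proof (intro chrom_sym_squarefree_coeff finite_union_vertices union_edges_loopless)
    show "\<not> Fam i v v" if "i \<in> set la" "v < i" for i v
      using that \<open>la \<in> partitions_of n\<close> fam[of i] by (auto simp: partitions_of_def simple_graph_def)
    show "card (union_vertices la) = n"
      using that by (simp add: card_union_vertices partitions_of_def)
  qed
  have "fact n = chrom_sym V E (indicator {1..n})"
    using G by (intro chrom_sym_squarefree_coeff[symmetric]) (auto simp: simple_graph_def n_def)
  also have "\<dots> = (\<Sum>la\<in>partitions_of n. c la * fact n)"
    using expansion coeff_union by (simp add: n_def)
  also have "\<dots> = (\<Sum>la\<in>partitions_of n. c la) * fact n"
    by (simp add: sum_distrib_right)
  finally show ?thesis
    unfolding n_def by simp
qed

end
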